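(* Let $\mathcal R'$ be a set of rows with the consecutive-ones property, $\pi$ a consecutive-ones ordering of $\mathcal R'$, and $Z$ a row such that $\mathcal R'\cup\{Z\}$ does not have the consecutive-ones property. Let $\mathcal R_Q$ be an overlap component of $\mathcal R'$ containing at least one row that meets $Z$. Let $A'$ be a row of $\mathcal R_Q$ meeting $Z$ whose right endpoint (last column in $\pi$) is leftmost among all rows of $\mathcal R_Q$ meeting $Z$, and let $B'$ be a row of $\mathcal R_Q$ meeting $Z$ whose left endpoint (first column in $\pi$) is rightmost among all rows of $\mathcal R_Q$ meeting $Z$. Then $\mathcal R_Q$ contains a suitable pair for $Z$ with respect to $\pi$ if and only if there is a column $c\notin Z$ lying in $\pi$ strictly after the right endpoint of $A'$ and strictly before the left endpoint of $B'$; in that case $\{A',B'\}$ is a suitable pair for $Z$ with respect to $\pi$.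
   Context: Each row is identified with the set of columns in which it has a 1. A consecutive-ones ordering of a set of rows is an ordering of all columns in which each of these rows occupies consecutive columns; a set of rows has the consecutive-ones property if such an ordering exists. Two rows overlap if they intersect and neither is a subset of the other; an overlap component of a set of rows is the vertex set of a connected component of the graph whose edges join overlapping rows. Suitable pair: distinct rows $A,B\in\mathcal R'$ form a suitable pair for $Z$ with respect to $\pi$ if they belong to the same overlap component of $\mathcal R'$, $A\cap Z\neq\emptyset$, $B\cap Z\neq\emptyset$, and there is a column $c\notin Z$ such that in $\pi$ every column of one of $A,B$ precedes $c$ and $c$ precedes every column of the other. *)

theory Defs
  imports Main
begin

text \<open>Columns form a finite set U (of some type 'c); a row is identified with
the set of columns in which it has a 1 (a subset of U).\<close>

definition col_ordering :: "'c set \<Rightarrow> 'c list \<Rightarrow> bool" where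
  "col_ordering U \<pi> \<longleftrightarrow> distinct \<pi> \<and> set \<pi> = U"

definition pos :: "'c list \<Rightarrow> 'c \<Rightarrow> nat" where
  "pos \<pi> c = (LEAST i. i < length \<pi> \<and> \<pi> ! i = c)"

definition consecutive_in :: "'c list \<Rightarrow> 'c set \<Rightarrow> bool" where
  "consecutive_in \<pi> R \<longleftrightarrow> (\<exists>i j. R = {\<pi> ! k | k. i \<le> k \<and> k \<le> j \<and> k < length \<pi>})"

definition c1_ordering :: "'c set \<Rightarrow> 'c set set \<Rightarrow> 'c list \<Rightarrow> bool" where
  "c1_ordering U Rs \<pi> \<longleftrightarrow> col_ordering U \<pi> \<and> (\<forall>R\<in>Rs. consecutive_in \<pi> R)"

definition has_C1P :: "'c set \<Rightarrow> 'c set set \<Rightarrow> bool" where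
  "has_C1P U Rs \<longleftrightarrow> (\<exists>\<pi>. c1_ordering U Rs \<pi>)"

definition overlap :: "'c set \<Rightarrow> 'c set \<Rightarrow> bool" where
  "overlap A B \<longleftrightarrow> A \<inter> B \<noteq> {} \<and> \<not> A \<subseteq> B \<and> \<not> B \<subseteq> A"

definition overlap_conn :: "'c set set \<Rightarrow> 'c set \<Rightarrow> 'c set \<Rightarrow> bool" where
  "overlap_conn Rs = (\<lambda>A B. A \<in> Rs \<and> B \<in> Rs \<and> overlap A B)\<^sup>*\<^sup>*"

definition overlap_component :: "'c set set \<Rightarrow> 'c set set \<Rightarrow> bool" where
  "overlap_component Rs Q \<longleftrightarrow> (\<exists>A\<in>Rs. Q = {B \<in> Rs. overlap_conn Rs A B})"

definition lend :: "'c list \<Rightarrow> 'c set \<Rightarrow> nat" where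
  "lend \<pi> A = Min (pos \<pi> ` A)"

definition rend :: "'c list \<Rightarrow> 'c set \<Rightarrow> nat" where
  "rend \<pi> A = Max (pos \<pi> ` A)"

definition suitable_pair ::
  "'c set \<Rightarrow> 'c set set \<Rightarrow> 'c set \<Rightarrow> 'c list \<Rightarrow> 'c set \<Rightarrow> 'c set \<Rightarrow> bool" where
  "suitable_pair U Rs Z \<pi> A B \<longleftrightarrow>
     A \<in> Rs \<and> B \<in> Rs \<and> A \<noteq> B \<and>
     (\<exists>Q. overlap_component Rs Q \<and> A \<in> Q \<and> B \<in> Q) \<and>
     A \<inter> Z \<noteq> {} \<and> B \<inter> Z \<noteq> {} \<and>
     (\<exists>c\<in>U. c \<notin> Z \<and>
        ((\<forall>a\<in>A. pos \<pi> a < pos \<pi> c) \<and> (\<forall>b\<in>B. pos \<pi> c < pos \<pi> b) \<or>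
         (\<forall>b\<in>B. pos \<pi> b < pos \<pi> c) \<and> (\<forall>a\<in>A. pos \<pi> c < pos \<pi> a)))"

end

theory Submission
  imports Defs
begin

text \<open>A column c separates two rows in \<pi> exactly when the right endpoint of one row lies
before c and the left endpoint of the other lies after it. Among the rows of the component
meeting Z, A' has the leftmost right endpoint and B' the rightmost left endpoint, so a
separating column for any such pair also lies strictly between rend A' and lend B'; conversely
such a column separates A' from B' themselves.\<close>

lemma overlap_component_subset: "overlap_component Rs Q \<Longrightarrow> Q \<subseteq> Rs"
  unfolding overlap_component_def by auto

lemma rend_less_iff:
  assumes "finite A" "A \<noteq> {}"
  shows "rend \<pi> A < p \<longleftrightarrow> (\<forall>a\<in>A. pos \<pi> a < p)"
  unfolding rend_def using assms by (simp add: Max_less_iff)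

lemma less_lend_iff:
  assumes "finite A" "A \<noteq> {}"
  shows "p < lend \<pi> A \<longleftrightarrow> (\<forall>a\<in>A. p < pos \<pi> a)"
  unfolding lend_def using assms by (simp add: Min_gr_iff)

lemma lend_le_rend:
  assumes "finite A" "A \<noteq> {}"
  shows "lend \<pi> A \<le> rend \<pi> A"
  unfolding lend_def rend_def using assms by (simp add: Min_le_iff Max_ge_iff)

lemma suitable_pair_imp_separating_column:
  assumes "suitable_pair U Rs Z \<pi> A B" "finite A" "finite B"
  shows "\<exists>c\<in>U. c \<notin> Z \<and>
           (rend \<pi> A < pos \<pi> c \<and> pos \<pi> c < lend \<pi> B \<or>
            rend \<pi> B < pos \<pi> c \<and> pos \<pi> c < lend \<pi> A)"
proof -
  have "A \<noteq> {}" "B \<noteq> {}"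
    using assms(1) unfolding suitable_pair_def by auto
  then show ?thesis
    using assms(1) unfolding suitable_pair_def
    by (simp add: rend_less_iff less_lend_iff assms(2,3))
qed

lemma suitable_pairI:
  assumes "overlap_component Rs Q" "A \<in> Q" "B \<in> Q"
    and "A \<inter> Z \<noteq> {}" "B \<inter> Z \<noteq> {}" "finite A" "finite B"
    and "c \<in> U" "c \<notin> Z" "rend \<pi> A < pos \<pi> c" "pos \<pi> c < lend \<pi> B"
  shows "suitable_pair U Rs Z \<pi> A B"
proof -
  have "A \<noteq> {}" "B \<noteq> {}" using assms(4,5) by auto
  have "A \<noteq> B"
    using lend_le_rend[OF \<open>finite A\<close> \<open>A \<noteq> {}\<close>, of \<pi>] assms(10,11) by auto
  moreover have "\<forall>a\<in>A. pos \<pi> a < pos \<pi> c" "\<forall>b\<in>B. pos \<pi> c < pos \<pi> b"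
    using assms(10,11) \<open>A \<noteq> {}\<close> \<open>B \<noteq> {}\<close> assms(6,7)
    by (simp_all add: rend_less_iff less_lend_iff)
  ultimately show ?thesis
    unfolding suitable_pair_def
    using assms(1-5,8,9) overlap_component_subset[OF assms(1)] by blast
qed

theorem mainTheorem7:
  fixes U :: "'c set" and Rs RQ :: "'c set set" and Z A' B' :: "'c set" and \<pi> :: "'c list"
  assumes "finite U"
    and "\<forall>R\<in>Rs. R \<subseteq> U"
    and "Z \<subseteq> U"
    and "c1_ordering U Rs \<pi>"
    and "\<not> has_C1P U (Rs \<union> {Z})"
    and "overlap_component Rs RQ"
    and "\<exists>R\<in>RQ. R \<inter> Z \<noteq> {}"
    and "A' \<in> RQ" "A' \<inter> Z \<noteq> {}"
    and "\<forall>X\<in>RQ. X \<inter> Z \<noteq> {} \<longrightarrow> rend \<pi> A' \<le> rend \<pi> X"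
    and "B' \<in> RQ" "B' \<inter> Z \<noteq> {}"
    and "\<forall>X\<in>RQ. X \<inter> Z \<noteq> {} \<longrightarrow> lend \<pi> X \<le> lend \<pi> B'"
  shows "((\<exists>A\<in>RQ. \<exists>B\<in>RQ. suitable_pair U Rs Z \<pi> A B) \<longleftrightarrow>
           (\<exists>c\<in>U. c \<notin> Z \<and> rend \<pi> A' < pos \<pi> c \<and> pos \<pi> c < lend \<pi> B'))
         \<and> ((\<exists>c\<in>U. c \<notin> Z \<and> rend \<pi> A' < pos \<pi> c \<and> pos \<pi> c < lend \<pi> B')
              \<longrightarrow> suitable_pair U Rs Z \<pi> A' B')"
proof -
  have finite_rows: "finite X" if "X \<in> RQ" for X
    using that overlap_component_subset[OF assms(6)] assms(1,2) finite_subset by blast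
  have sufficient: "suitable_pair U Rs Z \<pi> A' B'"
    if "c \<in> U" "c \<notin> Z" "rend \<pi> A' < pos \<pi> c" "pos \<pi> c < lend \<pi> B'" for c
    using suitable_pairI[OF assms(6,8,11,9,12)] finite_rows assms(8,11) that by blast
  have necessary: "\<exists>c\<in>U. c \<notin> Z \<and> rend \<pi> A' < pos \<pi> c \<and> pos \<pi> c < lend \<pi> B'"
    if "A \<in> RQ" "B \<in> RQ" "suitable_pair U Rs Z \<pi> A B" for A B
  proof -
    have "A \<inter> Z \<noteq> {}" "B \<inter> Z \<noteq> {}"
      using that(3) unfolding suitable_pair_def by auto
    then have "rend \<pi> A' \<le> rend \<pi> A" "rend \<pi> A' \<le> rend \<pi> B"
      "lend \<pi> A \<le> lend \<pi> B'" "lend \<pi> B \<le> lend \<pi> B'"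
      using assms(10,13) that(1,2) by auto
    with suitable_pair_imp_separating_column[OF that(3) finite_rows finite_rows] that(1,2)
    show ?thesis by fastforce
  qed
  show ?thesis using sufficient necessary assms(8,11) by blast
qed

end
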